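(* For either choice $\zeta\in\{q,-q^{3}\}$ (Fateev–Zamolodchikov or Izergin–Korepin model), the partition function $\mathcal{Z}(\lambda_1,\dots,\lambda_L)=\langle\bar 0|\mathcal{E}(\lambda_L)\cdots\mathcal{E}(\lambda_1)|0\rangle$ is a polynomial in the variables $x_i=e^{2\lambda_i}$ ($1\le i\le L$), symmetric under permutations of $\lambda_1,\dots,\lambda_L$, and of degree $2L-1$ in each variable $x_i$ separately.
   Context: Let $q\in\mathbb{C}\setminus\{0\}$ (with a fixed choice of $q^{1/2}$) and $\zeta\in\{q,-q^3\}$ ($\zeta=q$: Fateev–Zamolodchikov model; $\zeta=-q^3$: Izergin–Korepin model). For $\lambda\in\mathbb{C}$ put $x=e^{2\lambda}$ and define $a(\lambda)=(x-\zeta)(x-q^2)$, $b(\lambda)=q(x-1)(x-\zeta)$, $c(\lambda)=(1-q^2)(x-\zeta)$, $\bar c(\lambda)=x(1-q^2)(x-\zeta)$, and for $\alpha,\beta\in\{1,2,3\}$, with $\beta'=4-\beta$: $d_{\alpha,\beta}(\lambda)=q(x-1)(x-\zeta)+x(q^2-1)(\zeta-1)$ if $\alpha=\beta=2$; $d_{\alpha,\beta}(\lambda)=(x-1)[(x-\zeta)+x(q^2-1)]$ if $\alpha=\beta\neq 2$; $d_{\alpha,\beta}(\lambda)=(q^2-1)[\zeta(x-1)q^{(\alpha-\beta)/2}-\delta_{\alpha,\beta'}(x-\zeta)]$ if $\alpha<\beta$; $d_{\alpha,\beta}(\lambda)=x(q^2-1)[(x-1)q^{(\alpha-\beta)/2}-\delta_{\alpha,\beta'}(x-\zeta)]$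 if $\alpha>\beta$. Let $e_1,e_2,e_3$ be the standard basis of $\mathbb{C}^3$ and $E_{\alpha,\beta}$ the unit matrices. Define $\mathcal{R}(\lambda)\in\mathrm{End}(\mathbb{C}^3\otimes\mathbb{C}^3)$ as the $9\times 9$ matrix in the ordered basis $e_1\otimes e_1,e_1\otimes e_2,e_1\otimes e_3,e_2\otimes e_1,e_2\otimes e_2,e_2\otimes e_3,e_3\otimes e_1,e_3\otimes e_2,e_3\otimes e_3$ (indices $1,\dots,9$) whose only nonzero entries (row, column) are: $(1,1)=a$; $(2,2)=b$, $(2,4)=c$; $(3,3)=d_{1,1}$, $(3,5)=d_{1,2}$, $(3,7)=d_{1,3}$; $(4,2)=\bar c$, $(4,4)=b$; $(5,3)=d_{2,1}$, $(5,5)=d_{2,2}$, $(5,7)=d_{2,3}$; $(6,6)=b$, $(6,8)=c$; $(7,3)=d_{3,1}$, $(7,5)=d_{3,2}$, $(7,7)=d_{3,3}$; $(8,6)=\bar c$, $(8,8)=b$; $(9,9)=a$ (all evaluated at $\lambda$). Fix $L\ge1$ and inhomogeneities $\mu_1,\dots,\mu_L\in\mathbb{C}$. With $V_a=V_1=\dots=V_L=\mathbb{C}^3$, let $\mathcal{T}(\lambda)=\mathcal{R}_{a1}(\lambda-\mu_1)\mathcal{R}_{a2}(\lambda-\mu_2)\cdots\mathcal{R}_{aL}(\lambda-\mu_L)\in\mathrm{End}(V_a\otimes V_1\otimes\cdots\otimes V_L)$, where $\mathcal{R}_{aj}$ acts as $\mathcal{R}$ on $V_a\otimes V_j$. Write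 $\mathcal{T}(\lambda)=\sum_{\alpha,\beta}E_{\alpha,\beta}\otimes\mathcal{T}_\alpha^\beta(\lambda)$ and set $\mathcal{A}(\lambda)=\mathcal{T}_1^1(\lambda)$, $\mathcal{B}(\lambda)=\mathcal{T}_1^2(\lambda)$, $\mathcal{E}(\lambda)=\mathcal{T}_1^3(\lambda)$, operators on $V_1\otimes\cdots\otimes V_L$. Let $|0\rangle=e_1^{\otimes L}$ and let $\langle\bar0|$ be the dual vector of $e_3^{\otimes L}$ (taking the coefficient of $e_3^{\otimes L}$). *)

theory Defs
  imports Complex_Main "HOL-Library.Multiset" "HOL-Library.FuncSet"
begin

text \<open>Parameters: q (nonzero), s a fixed square root of q (so q^{k/2} = s powi k),
  zeta the model parameter. Basis indices of C^3 are 1,2,3.\<close>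

definition dFZ :: "complex \<Rightarrow> complex \<Rightarrow> complex \<Rightarrow> complex \<Rightarrow> nat \<Rightarrow> nat \<Rightarrow> complex" where
  "dFZ q s z x \<alpha> \<beta> =
    (if \<alpha> = 2 \<and> \<beta> = 2 then q * (x - 1) * (x - z) + x * (q^2 - 1) * (z - 1)
     else if \<alpha> = \<beta> then (x - 1) * ((x - z) + x * (q^2 - 1))
     else if \<alpha> < \<beta> then (q^2 - 1) * (z * (x - 1) * s powi (int \<alpha> - int \<beta>)
                                   - (if \<alpha> = 4 - \<beta> then 1 else 0) * (x - z))
     else x * (q^2 - 1) * ((x - 1) * s powi (int \<alpha> - int \<beta>)
                           - (if \<alpha> = 4 - \<beta> then 1 else 0) * (x - z)))"

definition Rmat :: "complex \<Rightarrow> complex \<Rightarrow> complex \<Rightarrow> complex \<Rightarrow> nat \<Rightarrow> nat \<Rightarrow> complex" where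
  "Rmat q s z lam r c =
    (let x = exp (2 * lam);
         a = (x - z) * (x - q^2);
         b = q * (x - 1) * (x - z);
         cc = (1 - q^2) * (x - z);
         cb = x * (1 - q^2) * (x - z);
         d = dFZ q s z x
     in if (r, c) = (1, 1) then a
        else if (r, c) = (2, 2) then b
        else if (r, c) = (2, 4) then cc
        else if (r, c) = (3, 3) then d 1 1
        else if (r, c) = (3, 5) then d 1 2
        else if (r, c) = (3, 7) then d 1 3
        else if (r, c) = (4, 2) then cb
        else if (r, c) = (4, 4) then b
        else if (r, c) = (5, 3) then d 2 1
        else if (r, c) = (5, 5) then d 2 2
        else if (r, c) = (5, 7) then d 2 3
        else if (r, c) = (6, 6) then b
        else if (r, c) = (6, 8) then cc
        else if (r, c) = (7, 3) then d 3 1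
        else if (r, c) = (7, 5) then d 3 2
        else if (r, c) = (7, 7) then d 3 3
        else if (r, c) = (8, 6) then cb
        else if (r, c) = (8, 8) then b
        else if (r, c) = (9, 9) then a
        else 0)"

text \<open>Matrix element <e_alpha (x) e_i| R(lam) |e_beta (x) e_j>, alpha,i,beta,j in {1,2,3}.\<close>
definition Rent :: "complex \<Rightarrow> complex \<Rightarrow> complex \<Rightarrow> complex \<Rightarrow> nat \<Rightarrow> nat \<Rightarrow> nat \<Rightarrow> nat \<Rightarrow> complex" where
  "Rent q s z lam \<alpha> i \<beta> j = Rmat q s z lam (3 * (\<alpha> - 1) + i) (3 * (\<beta> - 1) + j)"

text \<open>Matrix element <i_1..i_n| T_alpha^beta(lam) |j_1..j_n> of the monodromy matrix
  R_{a1}(lam-mu_1) ... R_{an}(lam-mu_n); the list of inhomogeneities is mus.\<close>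
fun Tmono :: "complex \<Rightarrow> complex \<Rightarrow> complex \<Rightarrow> complex \<Rightarrow> complex list \<Rightarrow> nat \<Rightarrow> nat
               \<Rightarrow> nat list \<Rightarrow> nat list \<Rightarrow> complex" where
  "Tmono q s z lam [] \<alpha> \<beta> [] [] = (if \<alpha> = \<beta> then 1 else 0)"
| "Tmono q s z lam (mu # ms) \<alpha> \<beta> (i # is) (j # js) =
     (\<Sum>\<gamma>\<in>{1,2,3}. Rent q s z (lam - mu) \<alpha> i \<gamma> j * Tmono q s z lam ms \<gamma> \<beta> is js)"
| "Tmono q s z lam _ \<alpha> \<beta> _ _ = 0"

text \<open>Basis states of V_1 (x) ... (x) V_L.\<close>
definition states :: "nat \<Rightarrow> nat list set" where
  "states L = {xs. length xs = L \<and> set xs \<subseteq> {1, 2, 3}}"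

text \<open>Action of E(lam) = T_1^3(lam) on a vector (given by its coordinates).\<close>
definition applyE :: "complex \<Rightarrow> complex \<Rightarrow> complex \<Rightarrow> complex list \<Rightarrow> complex
                      \<Rightarrow> (nat list \<Rightarrow> complex) \<Rightarrow> (nat list \<Rightarrow> complex)" where
  "applyE q s z mus lam v = (\<lambda>is. \<Sum>js\<in>states (length mus). Tmono q s z lam mus 1 3 is js * v js)"

text \<open>Z(lam_1..lam_L) = <0bar| E(lam_L) ... E(lam_1) |0>, lams = [lam_1, ..., lam_L].\<close>
definition Zpart :: "complex \<Rightarrow> complex \<Rightarrow> complex \<Rightarrow> complex list \<Rightarrow> complex list \<Rightarrow> complex" where
  "Zpart q s z mus lams =
     foldl (\<lambda>v lam. applyE q s z mus lam v)
           (\<lambda>js. if js = replicate (length mus) 1 then 1 else 0) lams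
       (replicate (length mus) 3)"

end

theory Submission
  imports Defs "HOL-Computational_Algebra.Polynomial"
begin

text \<open>Every entry of R(\<lambda> - \<mu>) is a polynomial of degree at most 2 in x = e^(2\<lambda>), and of
  degree at most 1 when the auxiliary index increases. An entry of E = T_1^3 is a sum over chains
  of auxiliary indices running from 1 to 3 through the L sites; every chain increases at least
  once, so the entry has degree at most 2L - 1. Applying E(\<lambda>_1), ..., E(\<lambda>_L) to |0> therefore
  gives a polynomial of degree at most 2L - 1 in each x_i.

  For the symmetry, R satisfies the Yang-Baxter equation (checked entrywise for both models),
  so the monodromy matrix satisfies the RTT relation. Its component from e_1 \<otimes> e_1 to e_3 \<otimes> e_3
  reads a(\<lambda> - \<mu>) E(\<lambda>) E(\<mu>) = a(\<lambda> - \<mu>) E(\<mu>) E(\<lambda>) with a(x) = (x - \<zeta>)(x - q^2). Both sides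
  are polynomials in e^(2\<lambda>), so the factor cancels: the operators E commute, and the partition
  function is invariant under permutations of the \<lambda>_i.\<close>

section \<open>Polynomials\<close>

lemma length_coeffs_le_Suc_iff: "length (coeffs p) \<le> Suc n \<longleftrightarrow> degree p \<le> n"
  by (cases "p = 0") (simp_all add: length_coeffs_degree)

lemma length_coeffs_mult_le:
  fixes p r :: "'a::idom poly"
  shows "length (coeffs (p * r)) \<le> length (coeffs p) + length (coeffs r) - 1"
  by (cases "p = 0 \<or> r = 0") (auto simp: length_coeffs_degree degree_mult_eq)

lemma length_coeffs_sum_le:
  assumes "finite A" "\<And>x. x \<in> A \<Longrightarrow> length (coeffs (f x)) \<le> n"
  shows "length (coeffs (\<Sum>x\<in>A. f x)) \<le> n"
proof (cases n)
  case 0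
  then show ?thesis using assms(2) by simp
next
  case (Suc m)
  then show ?thesis
    using assms by (auto simp: length_coeffs_le_Suc_iff intro: degree_sum_le)
qed

text \<open>The quadratic interpolating \<open>f\<close> at \<open>-1, 0, 1\<close>; it equals \<open>f\<close> whenever \<open>f\<close> is quadratic,
  which produces the polynomials of the R-matrix entries without listing their coefficients.\<close>

definition quad_interp :: "('a::field_char_0 \<Rightarrow> 'a) \<Rightarrow> 'a poly" where
  "quad_interp f = [:f 0, (f 1 - f (-1)) / 2, (f 1 + f (-1)) / 2 - f 0:]"

lemma poly_quad_interp:
  "poly (quad_interp f) x = f 0 + (f 1 - f (-1)) / 2 * x + ((f 1 + f (-1)) / 2 - f 0) * x^2"
  by (simp add: quad_interp_def power2_eq_square algebra_simps)

lemma degree_quad_interp: "degree (quad_interp f) \<le> 2"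
proof -
  have "degree [:(f 1 - f (-1)) / 2, (f 1 + f (-1)) / 2 - f 0:] \<le> 1" by simp
  then show ?thesis
    unfolding quad_interp_def using degree_pCons_le[of "f 0"] by (simp add: le_trans)
qed

lemma degree_quad_interp_affine:
  assumes "f 1 + f (-1) = 2 * f 0"
  shows "degree (quad_interp f) \<le> 1"
proof -
  have "quad_interp f = [:f 0, (f 1 - f (-1)) / 2:]"
    using assms by (simp add: quad_interp_def)
  then show ?thesis by simp
qed

lemma exp_surjective_nonzero:
  fixes X :: complex
  assumes "X \<noteq> 0"
  shows "\<exists>w. exp w = X"
proof -
  have "exp (of_real (ln (cmod X)) + \<i> * of_real (Arg X)) = of_real (cmod X) * cis (Arg X)"
    using assms by (simp add: exp_add exp_of_real cis_conv_exp)
  also have "\<dots> = X"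
    using rcis_cmod_Arg[of X] by (simp add: rcis_def)
  finally show ?thesis by blast
qed

lemma poly_cancel_nonzero_factor:
  fixes a p r :: "complex poly"
  assumes "a \<noteq> 0" and "\<And>X. X \<noteq> 0 \<Longrightarrow> poly a X * poly p X = poly a X * poly r X"
  shows "p = r"
proof -
  have "{X. X \<noteq> 0} \<subseteq> {X. poly (a * (p - r)) X = 0}"
    using assms(2) by (auto simp: algebra_simps)
  moreover have "infinite {X :: complex. X \<noteq> 0}"
  proof
    assume "finite {X :: complex. X \<noteq> 0}"
    then have "finite (insert 0 {X :: complex. X \<noteq> 0})" by simp
    moreover have "insert 0 {X :: complex. X \<noteq> 0} = UNIV" by auto
    ultimately show False using infinite_UNIV_char_0 by metis
  qed
  ultimately have "a * (p - r) = 0"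
    using poly_roots_finite finite_subset by blast
  then show ?thesis using assms(1) by simp
qed

definition poly_in_vars :: "('a \<Rightarrow> 'b::comm_semiring_1) \<Rightarrow> nat \<Rightarrow> nat \<Rightarrow> ('a list \<Rightarrow> 'b) \<Rightarrow> bool" where
  "poly_in_vars g m D f \<longleftrightarrow>
     (\<exists>c. \<forall>as. length as = m \<longrightarrow>
        f as = (\<Sum>e\<in>PiE {..<m} (\<lambda>_. {..D}). c e * (\<Prod>i<m. g (as ! i) ^ e i)))"

lemma poly_in_vars_cong:
  assumes "poly_in_vars g m D f" "\<And>as. length as = m \<Longrightarrow> f as = f' as"
  shows "poly_in_vars g m D f'"
  using assms unfolding poly_in_vars_def by metis

lemma poly_in_vars_const: "poly_in_vars g 0 D (\<lambda>_. c)"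
  unfolding poly_in_vars_def by (intro exI[of _ "\<lambda>_. c"]) simp

lemma poly_in_vars_scale:
  assumes "poly_in_vars g m D f"
  shows "poly_in_vars g m D (\<lambda>as. c * f as)"
proof -
  obtain d where "\<forall>as. length as = m \<longrightarrow>
      f as = (\<Sum>e\<in>PiE {..<m} (\<lambda>_. {..D}). d e * (\<Prod>i<m. g (as ! i) ^ e i))"
    using assms unfolding poly_in_vars_def by blast
  then show ?thesis
    unfolding poly_in_vars_def by (intro exI[of _ "\<lambda>e. c * d e"]) (simp add: sum_distrib_left mult.assoc)
qed

lemma poly_in_vars_add:
  assumes "poly_in_vars g m D f" "poly_in_vars g m D f'"
  shows "poly_in_vars g m D (\<lambda>as. f as + f' as)"
proof -
  obtain c c' where
    "\<forall>as. length as = m \<longrightarrow> f as = (\<Sum>e\<in>PiE {..<m} (\<lambda>_. {..D}). c e * (\<Prod>i<m. g (as ! i) ^ e i))"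
    "\<forall>as. length as = m \<longrightarrow> f' as = (\<Sum>e\<in>PiE {..<m} (\<lambda>_. {..D}). c' e * (\<Prod>i<m. g (as ! i) ^ e i))"
    using assms unfolding poly_in_vars_def by blast
  then show ?thesis
    unfolding poly_in_vars_def
    by (intro exI[of _ "\<lambda>e. c e + c' e"]) (simp add: sum.distrib distrib_right)
qed

lemma poly_in_vars_sum:
  assumes "finite A" "\<And>y. y \<in> A \<Longrightarrow> poly_in_vars g m D (f y)"
  shows "poly_in_vars g m D (\<lambda>as. \<Sum>y\<in>A. f y as)"
  using assms
proof (induction A rule: finite_induct)
  case empty
  show ?case unfolding poly_in_vars_def by (intro exI[of _ "\<lambda>_. 0"]) simp
next
  case (insert y A)
  then show ?case by (simp add: poly_in_vars_add)
qed

lemma poly_in_vars_prod: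
  assumes "\<And>i. i < m \<Longrightarrow> degree (p i) \<le> D"
  shows "poly_in_vars g m D (\<lambda>as. \<Prod>i<m. poly (p i) (g (as ! i)))"
  unfolding poly_in_vars_def
proof (intro exI allI impI)
  fix as
  have "poly (p i) y = (\<Sum>k\<le>D. coeff (p i) k * y ^ k)" if "i < m" for i y
  proof -
    have "poly (p i) y = poly (\<Sum>k\<le>D. monom (coeff (p i) k) k) y"
      using poly_as_sum_of_monoms'[OF assms[OF that]] by simp
    then show ?thesis by (simp add: poly_sum poly_monom)
  qed
  then have "(\<Prod>i<m. poly (p i) (g (as ! i))) = (\<Prod>i<m. \<Sum>k\<le>D. coeff (p i) k * g (as ! i) ^ k)"
    by simp
  also have "\<dots> = (\<Sum>e\<in>PiE {..<m} (\<lambda>_. {..D}). \<Prod>i<m. coeff (p i) (e i) * g (as ! i) ^ e i)"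
    by (rule prod_sum_PiE) auto
  also have "\<dots> = (\<Sum>e\<in>PiE {..<m} (\<lambda>_. {..D}). (\<Prod>i<m. coeff (p i) (e i)) * (\<Prod>i<m. g (as ! i) ^ e i))"
    by (simp add: prod.distrib)
  finally show "(\<Prod>i<m. poly (p i) (g (as ! i))) =
      (\<Sum>e\<in>PiE {..<m} (\<lambda>_. {..D}). (\<Prod>i<m. coeff (p i) (e i)) * (\<Prod>i<m. g (as ! i) ^ e i))" .
qed

lemma poly_in_vars_snoc:
  assumes "poly_in_vars g m D f" "degree p \<le> D"
  shows "poly_in_vars g (Suc m) D (\<lambda>as. poly p (g (last as)) * f (butlast as))"
proof -
  obtain c where c: "\<forall>bs. length bs = m \<longrightarrow>
      f bs = (\<Sum>e\<in>PiE {..<m} (\<lambda>_. {..D}). c e * (\<Prod>i<m. g (bs ! i) ^ e i))"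
    using assms(1) unfolding poly_in_vars_def by blast
  define P where "P e i = (if i < m then monom 1 (e i) else p)" for e :: "nat \<Rightarrow> nat" and i
  have "poly_in_vars g (Suc m) D (\<lambda>as. \<Sum>e\<in>PiE {..<m} (\<lambda>_. {..D}).
           c e * (\<Prod>i<Suc m. poly (P e i) (g (as ! i))))"
    using assms(2) by (intro poly_in_vars_sum poly_in_vars_scale poly_in_vars_prod)
      (auto simp: P_def degree_monom_eq PiE_iff intro: finite_PiE)
  then show ?thesis
  proof (rule poly_in_vars_cong)
    fix as :: "'a list" assume "length as = Suc m"
    then obtain bs b where as: "as = bs @ [b]" and bs: "length bs = m"
      by (cases as rule: rev_cases) auto
    have "(\<Prod>i<m. poly (P e i) (g (as ! i))) = (\<Prod>i<m. g (bs ! i) ^ e i)" for e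
      by (rule prod.cong) (simp_all add: P_def as bs nth_append poly_monom)
    then have "(\<Prod>i<Suc m. poly (P e i) (g (as ! i))) = poly p (g b) * (\<Prod>i<m. g (bs ! i) ^ e i)" for e
      using bs by (simp add: P_def as nth_append mult.commute)
    then show "(\<Sum>e\<in>PiE {..<m} (\<lambda>_. {..D}). c e * (\<Prod>i<Suc m. poly (P e i) (g (as ! i)))) =
        poly p (g (last as)) * f (butlast as)"
      using c bs by (simp add: as sum_distrib_left mult_ac)
  qed
qed

lemma sum_insert_123: "(\<Sum>k\<in>{1::nat,2,3}. f k) = f 1 + f 2 + f 3"
  by (simp add: add.assoc)

lemma sum_swap_pairs:
  "(\<Sum>a\<in>A. \<Sum>b\<in>B. \<Sum>c\<in>C. \<Sum>d\<in>D. f a b c d) = (\<Sum>c\<in>C. \<Sum>d\<in>D. \<Sum>a\<in>A. \<Sum>b\<in>B. f a b c d)"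
proof -
  have "(\<Sum>a\<in>A. \<Sum>b\<in>B. \<Sum>c\<in>C. \<Sum>d\<in>D. f a b c d) = (\<Sum>a\<in>A. \<Sum>c\<in>C. \<Sum>b\<in>B. \<Sum>d\<in>D. f a b c d)"
    by (rule sum.cong[OF refl], rule sum.swap)
  also have "\<dots> = (\<Sum>a\<in>A. \<Sum>c\<in>C. \<Sum>d\<in>D. \<Sum>b\<in>B. f a b c d)"
    by (rule sum.cong[OF refl], rule sum.cong[OF refl], rule sum.swap)
  also have "\<dots> = (\<Sum>c\<in>C. \<Sum>a\<in>A. \<Sum>d\<in>D. \<Sum>b\<in>B. f a b c d)"
    by (rule sum.swap)
  also have "\<dots> = (\<Sum>c\<in>C. \<Sum>d\<in>D. \<Sum>a\<in>A. \<Sum>b\<in>B. f a b c d)"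
    by (rule sum.cong[OF refl], rule sum.swap)
  finally show ?thesis .
qed

lemma sum_pairs_assoc:
  fixes A :: "'i \<Rightarrow> 'i \<Rightarrow> 'a::comm_semiring_1"
  shows "(\<Sum>c\<in>I. \<Sum>c2\<in>I. A c c2 * (\<Sum>g\<in>I. \<Sum>g2\<in>I. B c c2 g g2 * C g g2)) =
         (\<Sum>g\<in>I. \<Sum>g2\<in>I. (\<Sum>c\<in>I. \<Sum>c2\<in>I. A c c2 * B c c2 g g2) * C g g2)"
proof -
  have "(\<Sum>c\<in>I. \<Sum>c2\<in>I. A c c2 * (\<Sum>g\<in>I. \<Sum>g2\<in>I. B c c2 g g2 * C g g2)) =
        (\<Sum>c\<in>I. \<Sum>c2\<in>I. \<Sum>g\<in>I. \<Sum>g2\<in>I. A c c2 * B c c2 g g2 * C g g2)"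
    by (simp add: sum_distrib_left mult.assoc)
  also have "\<dots> = (\<Sum>g\<in>I. \<Sum>g2\<in>I. \<Sum>c\<in>I. \<Sum>c2\<in>I. A c c2 * B c c2 g g2 * C g g2)"
    by (rule sum_swap_pairs)
  also have "\<dots> = (\<Sum>g\<in>I. \<Sum>g2\<in>I. (\<Sum>c\<in>I. \<Sum>c2\<in>I. A c c2 * B c c2 g g2) * C g g2)"
    by (simp add: sum_distrib_right)
  finally show ?thesis .
qed

lemma sum_product_pairs:
  fixes A :: "'k \<Rightarrow> 'g \<Rightarrow> 'a::comm_semiring_1"
  shows "(\<Sum>k\<in>K. \<Sum>ks\<in>S. (\<Sum>g\<in>G. A k g * B g ks) * (\<Sum>g2\<in>G. C k g2 * D g2 ks)) =
         (\<Sum>g\<in>G. \<Sum>g2\<in>G. (\<Sum>k\<in>K. A k g * C k g2) * (\<Sum>ks\<in>S. B g ks * D g2 ks))"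
proof -
  have "(\<Sum>k\<in>K. \<Sum>ks\<in>S. (\<Sum>g\<in>G. A k g * B g ks) * (\<Sum>g2\<in>G. C k g2 * D g2 ks)) =
        (\<Sum>k\<in>K. \<Sum>ks\<in>S. \<Sum>g\<in>G. \<Sum>g2\<in>G. (A k g * C k g2) * (B g ks * D g2 ks))"
    by (simp add: sum_product mult_ac)
  also have "\<dots> = (\<Sum>g\<in>G. \<Sum>g2\<in>G. \<Sum>k\<in>K. \<Sum>ks\<in>S. (A k g * C k g2) * (B g ks * D g2 ks))"
    by (rule sum_swap_pairs)
  also have "\<dots> = (\<Sum>g\<in>G. \<Sum>g2\<in>G. (\<Sum>k\<in>K. A k g * C k g2) * (\<Sum>ks\<in>S. B g ks * D g2 ks))"
    by (simp add: sum_product)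
  finally show ?thesis .
qed

lemma sum_pairs_delta:
  fixes f :: "'i \<Rightarrow> 'i \<Rightarrow> 'a::comm_semiring_1"
  assumes "finite A" "b \<in> A" "b2 \<in> A"
  shows "(\<Sum>c\<in>A. \<Sum>c2\<in>A. f c c2 * (if c = b \<and> c2 = b2 then 1 else 0)) = f b b2"
proof -
  have "(\<Sum>c\<in>A. \<Sum>c2\<in>A. f c c2 * (if c = b \<and> c2 = b2 then 1 else 0)) =
        (\<Sum>c\<in>A. if c = b then (\<Sum>c2\<in>A. if c2 = b2 then f c c2 else 0) else 0)"
    by (intro sum.cong refl) (auto intro: sum.cong)
  also have "\<dots> = f b b2" using assms by (simp add: sum.delta)
  finally show ?thesis .
qed

section \<open>The R-matrix as a function of x\<close>

text \<open>The matrix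
  only connects basis vectors of equal charge \<alpha> + i, and the entries d_\<alpha>\<beta> form the charge-4
  sector.\<close>

definition Rx :: "complex \<Rightarrow> complex \<Rightarrow> complex \<Rightarrow> complex \<Rightarrow> nat \<Rightarrow> nat \<Rightarrow> nat \<Rightarrow> nat \<Rightarrow> complex" where
  "Rx q s z x \<alpha> i \<beta> j =
    (if \<alpha> + i \<noteq> \<beta> + j then 0
     else if \<alpha> + i = 4 then dFZ q s z x \<alpha> \<beta>
     else if \<alpha> = i then (x - z) * (x - q^2)
     else if \<alpha> = \<beta> then q * (x - 1) * (x - z)
     else if \<alpha> < \<beta> then (1 - q^2) * (x - z)
     else x * (1 - q^2) * (x - z))"

lemma Rent_eq_Rx:
  assumes "\<alpha> \<in> {1,2,3}" "i \<in> {1,2,3}" "\<beta> \<in> {1,2,3}" "j \<in> {1,2,3}"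
  shows "Rent q s z lam \<alpha> i \<beta> j = Rx q s z (exp (2 * lam)) \<alpha> i \<beta> j"
  using assms unfolding Rent_def Rmat_def Rx_def Let_def
  by (elim insertE emptyE; simp)

lemma Rx_charge_conservation: "\<alpha> + i \<noteq> \<beta> + j \<Longrightarrow> Rx q s z x \<alpha> i \<beta> j = 0"
  by (simp add: Rx_def)

lemma Rx_affine_above_diagonal:
  assumes "\<alpha> < \<beta>" "\<alpha> \<in> {1,2,3}" "i \<in> {1,2,3}" "\<beta> \<in> {1,2,3}" "j \<in> {1,2,3}"
  shows "Rx q s z (x + y) \<alpha> i \<beta> j + Rx q s z (x - y) \<alpha> i \<beta> j = 2 * Rx q s z x \<alpha> i \<beta> j"
proof -
  consider "\<alpha> + i \<noteq> \<beta> + j" | "\<alpha> + i = 4" | "\<alpha> + i \<noteq> 4" "\<alpha> \<noteq> i"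
    using assms by (cases "\<alpha> + i = \<beta> + j"; cases "\<alpha> + i = 4") auto
  then show ?thesis
    by cases (use assms(1) in \<open>auto simp: Rx_def dFZ_def algebra_simps\<close>)
qed

lemma Rent_first_row_last_column:
  assumes "c \<in> {1,2,3}" "c2 \<in> {1,2,3}"
  shows "Rent q s z lam 1 1 c c2 = (if c = 1 \<and> c2 = 1 then (exp (2 * lam) - z) * (exp (2 * lam) - q^2) else 0)"
    and "Rent q s z lam c c2 3 3 = (if c = 3 \<and> c2 = 3 then (exp (2 * lam) - z) * (exp (2 * lam) - q^2) else 0)"
  using assms by (auto simp: Rent_eq_Rx Rx_def)

definition Rpoly :: "complex \<Rightarrow> complex \<Rightarrow> complex \<Rightarrow> complex \<Rightarrow> nat \<Rightarrow> nat \<Rightarrow> nat \<Rightarrow> nat \<Rightarrow> complex poly" where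
  "Rpoly q s z w \<alpha> i \<beta> j = quad_interp (\<lambda>x. Rx q s z (w * x) \<alpha> i \<beta> j)"

lemma poly_Rpoly: "poly (Rpoly q s z w \<alpha> i \<beta> j) x = Rx q s z (w * x) \<alpha> i \<beta> j"
  unfolding Rpoly_def poly_quad_interp Rx_def dFZ_def
  by (simp split: if_split; intro conjI impI; simp add: field_simps power2_eq_square)

lemma length_coeffs_Rpoly:
  assumes "\<alpha> \<in> {1,2,3}" "i \<in> {1,2,3}" "\<beta> \<in> {1,2,3}" "j \<in> {1,2,3}"
  shows "length (coeffs (Rpoly q s z w \<alpha> i \<beta> j)) \<le> (if \<alpha> < \<beta> then 2 else 3)"
proof (cases "\<alpha> < \<beta>")
  case True
  have "Rx q s z (0 + w) \<alpha> i \<beta> j + Rx q s z (0 - w) \<alpha> i \<beta> j = 2 * Rx q s z 0 \<alpha> i \<beta> j"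
    using Rx_affine_above_diagonal True assms by blast
  then have "degree (Rpoly q s z w \<alpha> i \<beta> j) \<le> 1"
    unfolding Rpoly_def by (intro degree_quad_interp_affine) simp
  then show ?thesis using True by (simp add: numeral_2_eq_2 length_coeffs_le_Suc_iff)
next
  case False
  have "degree (Rpoly q s z w \<alpha> i \<beta> j) \<le> 2"
    unfolding Rpoly_def by (rule degree_quad_interp)
  then show ?thesis using False by (simp add: numeral_3_eq_3 length_coeffs_le_Suc_iff)
qed

lemma Rent_diff_eq_poly:
  assumes "\<alpha> \<in> {1,2,3}" "i \<in> {1,2,3}" "\<beta> \<in> {1,2,3}" "j \<in> {1,2,3}"
  shows "Rent q s z (lam - mu) \<alpha> i \<beta> j = poly (Rpoly q s z (exp (-2 * mu)) \<alpha> i \<beta> j) (exp (2 * lam))"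
proof -
  have "exp (2 * (lam - mu)) = exp (-2 * mu) * exp (2 * lam)"
    unfolding mult_exp_exp by (simp add: algebra_simps)
  then show ?thesis using assms by (simp add: Rent_eq_Rx poly_Rpoly)
qed

section \<open>Polynomiality of the partition function\<close>

lemma finite_states: "finite (states n)"
  unfolding states_def using finite_lists_length_eq[of "{1,2,3::nat}" n] by (simp add: conj_commute)

lemma sum_states_Suc:
  "(\<Sum>xs\<in>states (Suc n). f xs) = (\<Sum>k\<in>{1,2,3}. \<Sum>ks\<in>states n. f (k # ks))"
proof -
  have "states (Suc n) = (\<lambda>(k, ks). k # ks) ` ({1,2,3} \<times> states n)"
    unfolding states_def by (auto simp: length_Suc_conv image_iff)
  moreover have "inj_on (\<lambda>(k, ks). k # ks) ({1,2,3::nat} \<times> states n)"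
    by (auto simp: inj_on_def)
  ultimately show ?thesis
    by (simp add: sum.reindex sum.cartesian_product case_prod_unfold)
qed

fun Tpoly :: "complex \<Rightarrow> complex \<Rightarrow> complex \<Rightarrow> complex list \<Rightarrow> nat \<Rightarrow> nat \<Rightarrow> nat list \<Rightarrow> nat list
               \<Rightarrow> complex poly" where
  "Tpoly q s z [] \<alpha> \<beta> [] [] = (if \<alpha> = \<beta> then 1 else 0)"
| "Tpoly q s z (mu # ms) \<alpha> \<beta> (i # xs) (j # ys) =
     (\<Sum>\<gamma>\<in>{1,2,3}. Rpoly q s z (exp (-2 * mu)) \<alpha> i \<gamma> j * Tpoly q s z ms \<gamma> \<beta> xs ys)"
| "Tpoly q s z _ \<alpha> \<beta> _ _ = 0"

lemma Tmono_eq_poly_Tpoly: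
  assumes "\<alpha> \<in> {1,2,3}" "set xs \<subseteq> {1,2,3}" "set ys \<subseteq> {1,2,3}"
  shows "Tmono q s z lam mus \<alpha> \<beta> xs ys = poly (Tpoly q s z mus \<alpha> \<beta> xs ys) (exp (2 * lam))"
  using assms
  by (induction q s z lam mus \<alpha> \<beta> xs ys rule: Tmono.induct)
    (simp_all add: poly_sum Rent_diff_eq_poly)

lemma length_coeffs_Tpoly:
  assumes "\<alpha> \<in> {1,2,3}" "xs \<in> states (length mus)" "ys \<in> states (length mus)"
  shows "length (coeffs (Tpoly q s z mus \<alpha> \<beta> xs ys)) \<le> 2 * length mus + (if \<alpha> < \<beta> then 0 else 1)"
  using assms
proof (induction mus arbitrary: \<alpha> xs ys)
  case Nil
  then show ?case by (simp add: states_def)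
next
  case (Cons mu ms)
  obtain i xs' j ys' where xs: "xs = i # xs'" "i \<in> {1,2,3}" "xs' \<in> states (length ms)"
    and ys: "ys = j # ys'" "j \<in> {1,2,3}" "ys' \<in> states (length ms)"
    using Cons.prems(2,3) by (cases xs; cases ys) (auto simp: states_def)
  have "length (coeffs (Rpoly q s z (exp (-2 * mu)) \<alpha> i \<gamma> j * Tpoly q s z ms \<gamma> \<beta> xs' ys'))
          \<le> 2 * length (mu # ms) + (if \<alpha> < \<beta> then 0 else 1)" if "\<gamma> \<in> {1,2,3}" for \<gamma>
  proof -
    have "length (coeffs (Rpoly q s z (exp (-2 * mu)) \<alpha> i \<gamma> j)) \<le> (if \<alpha> < \<gamma> then 2 else 3)"
      using length_coeffs_Rpoly Cons.prems(1) xs(2) ys(2) that by blast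
    moreover have "length (coeffs (Tpoly q s z ms \<gamma> \<beta> xs' ys')) \<le> 2 * length ms + (if \<gamma> < \<beta> then 0 else 1)"
      using Cons.IH that xs(3) ys(3) by blast
    ultimately show ?thesis
      using length_coeffs_mult_le[of "Rpoly q s z (exp (-2 * mu)) \<alpha> i \<gamma> j" "Tpoly q s z ms \<gamma> \<beta> xs' ys'"]
      by (auto split: if_splits)
  qed
  then show ?case
    unfolding xs ys Tpoly.simps by (intro length_coeffs_sum_le) auto
qed

lemma degree_Tpoly_E:
  assumes "xs \<in> states (length mus)" "ys \<in> states (length mus)"
  shows "degree (Tpoly q s z mus 1 3 xs ys) \<le> 2 * length mus - 1"
  using length_coeffs_Tpoly[of 1 xs mus ys q s z 3] assms by (simp add: degree_eq_length_coeffs)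

lemma poly_in_vars_applyE_iterate:
  assumes "xs \<in> states (length mus)"
  shows "poly_in_vars (\<lambda>lam. exp (2 * lam)) m (2 * length mus - 1)
           (\<lambda>lams. foldl (\<lambda>v lam. applyE q s z mus lam v) v lams xs)"
  using assms
proof (induction m arbitrary: xs)
  case 0
  show ?case by (rule poly_in_vars_cong[OF poly_in_vars_const]) simp
next
  case (Suc m)
  have "poly_in_vars (\<lambda>lam. exp (2 * lam)) (Suc m) (2 * length mus - 1)
          (\<lambda>lams. \<Sum>ys\<in>states (length mus). poly (Tpoly q s z mus 1 3 xs ys) (exp (2 * last lams))
             * foldl (\<lambda>v lam. applyE q s z mus lam v) v (butlast lams) ys)"
    using Suc by (intro poly_in_vars_sum poly_in_vars_snoc degree_Tpoly_E finite_states) auto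
  then show ?case
  proof (rule poly_in_vars_cong)
    fix lams :: "complex list" assume "length lams = Suc m"
    then obtain ls l where "lams = ls @ [l]" by (cases lams rule: rev_cases) auto
    then show "(\<Sum>ys\<in>states (length mus). poly (Tpoly q s z mus 1 3 xs ys) (exp (2 * last lams))
             * foldl (\<lambda>v lam. applyE q s z mus lam v) v (butlast lams) ys)
        = foldl (\<lambda>v lam. applyE q s z mus lam v) v lams xs"
      using Suc.prems by (auto simp: applyE_def states_def Tmono_eq_poly_Tpoly intro: sum.cong)
  qed
qed

section \<open>The Yang-Baxter equation and the RTT relation\<close>

text \<open>Components of \<open>R\<^sub>1\<^sub>2(X) R\<^sub>1\<^sub>3(XY) R\<^sub>2\<^sub>3(Y)\<close> and of \<open>R\<^sub>2\<^sub>3(Y) R\<^sub>1\<^sub>3(XY) R\<^sub>1\<^sub>2(X)\<close>.\<close>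

definition YB_lhs :: "(complex \<Rightarrow> nat \<Rightarrow> nat \<Rightarrow> nat \<Rightarrow> nat \<Rightarrow> complex) \<Rightarrow> complex \<Rightarrow> complex
    \<Rightarrow> nat \<Rightarrow> nat \<Rightarrow> nat \<Rightarrow> nat \<Rightarrow> nat \<Rightarrow> nat \<Rightarrow> complex" where
  "YB_lhs R X Y a a2 i j g g2 =
     (\<Sum>c\<in>{1,2,3}. \<Sum>c2\<in>{1,2,3}. R X a a2 c c2 * (\<Sum>k\<in>{1,2,3}. R (X * Y) c i g k * R Y c2 k g2 j))"

definition YB_rhs :: "(complex \<Rightarrow> nat \<Rightarrow> nat \<Rightarrow> nat \<Rightarrow> nat \<Rightarrow> complex) \<Rightarrow> complex \<Rightarrow> complex
    \<Rightarrow> nat \<Rightarrow> nat \<Rightarrow> nat \<Rightarrow> nat \<Rightarrow> nat \<Rightarrow> nat \<Rightarrow> complex" where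
  "YB_rhs R X Y a a2 i j g g2 =
     (\<Sum>c\<in>{1,2,3}. \<Sum>c2\<in>{1,2,3}. (\<Sum>k\<in>{1,2,3}. R Y a2 i c2 k * R (X * Y) a k c j) * R X c c2 g g2)"

lemma YB_sides_vanish:
  assumes "a + a2 + i \<noteq> g + g2 + j"
  shows "YB_lhs (Rx q s z) X Y a a2 i j g g2 = 0" and "YB_rhs (Rx q s z) X Y a a2 i j g g2 = 0"
proof -
  have "Rx q s z X a a2 c c2 * (Rx q s z (X * Y) c i g k * Rx q s z Y c2 k g2 j) = 0" for c c2 k
    using assms
    by (cases "a + a2 = c + c2"; cases "c + i = g + k"; cases "c2 + k = g2 + j")
      (auto simp: Rx_charge_conservation)
  then show "YB_lhs (Rx q s z) X Y a a2 i j g g2 = 0"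
    unfolding YB_lhs_def sum_distrib_left by (simp only: sum.neutral_const)
  have "Rx q s z Y a2 i c2 k * Rx q s z (X * Y) a k c j * Rx q s z X c c2 g g2 = 0" for c c2 k
    using assms
    by (cases "a2 + i = c2 + k"; cases "a + k = c + j"; cases "c + c2 = g + g2")
      (auto simp: Rx_charge_conservation)
  then show "YB_rhs (Rx q s z) X Y a a2 i j g g2 = 0"
    unfolding YB_rhs_def sum_distrib_right by (simp only: sum.neutral_const)
qed

text \<open>With \<open>q = s\<^sup>2\<close> and \<open>\<zeta> = q w\<close>, where \<open>w = 1\<close> (Fateev-Zamolodchikov) or \<open>w = -q\<^sup>2\<close>
  (Izergin-Korepin), the powers of \<open>q\<^sup>1\<^sup>/\<^sup>2\<close> in the block d become polynomials in s.\<close>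

lemma Rx_entries:
  assumes "s \<noteq> 0"
  defines "q \<equiv> s^2"
  shows
  "Rx q s (q*w) x 1 1 1 1 = (x - q*w) * (x - q^2)"
  "Rx q s (q*w) x 1 2 1 2 = q * (x - 1) * (x - q*w)"
  "Rx q s (q*w) x 1 2 2 1 = (1 - q^2) * (x - q*w)"
  "Rx q s (q*w) x 2 1 1 2 = x * (1 - q^2) * (x - q*w)"
  "Rx q s (q*w) x 2 1 2 1 = q * (x - 1) * (x - q*w)"
  "Rx q s (q*w) x 1 3 1 3 = (x - 1) * ((x - q*w) + x * (q^2 - 1))"
  "Rx q s (q*w) x 1 3 2 2 = (q^2 - 1) * w * s * (x - 1)"
  "Rx q s (q*w) x 1 3 3 1 = (q^2 - 1) * (w * (x - 1) - (x - q*w))"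
  "Rx q s (q*w) x 2 2 1 3 = x * (q^2 - 1) * s * (x - 1)"
  "Rx q s (q*w) x 2 2 2 2 = q * (x - 1) * (x - q*w) + x * (q^2 - 1) * (q*w - 1)"
  "Rx q s (q*w) x 2 2 3 1 = (q^2 - 1) * w * s * (x - 1)"
  "Rx q s (q*w) x 3 1 1 3 = x * (q^2 - 1) * (q * (x - 1) - (x - q*w))"
  "Rx q s (q*w) x 3 1 2 2 = x * (q^2 - 1) * s * (x - 1)"
  "Rx q s (q*w) x 3 1 3 1 = (x - 1) * ((x - q*w) + x * (q^2 - 1))"
  "Rx q s (q*w) x 2 3 2 3 = q * (x - 1) * (x - q*w)"
  "Rx q s (q*w) x 2 3 3 2 = (1 - q^2) * (x - q*w)"
  "Rx q s (q*w) x 3 2 2 3 = x * (1 - q^2) * (x - q*w)"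
  "Rx q s (q*w) x 3 2 3 2 = q * (x - 1) * (x - q*w)"
  "Rx q s (q*w) x 3 3 3 3 = (x - q*w) * (x - q^2)"
  using assms(1) by (simp_all add: Rx_def dFZ_def q_def power_int_minus field_simps power2_eq_square)

lemma Rx_Yang_Baxter:
  assumes "s \<noteq> 0" "w = 1 \<or> w = - (s^4)"
    and "a \<in> {1,2,3}" "a2 \<in> {1,2,3}" "i \<in> {1,2,3}" "j \<in> {1,2,3}" "g \<in> {1,2,3}" "g2 \<in> {1,2,3}"
  shows "YB_lhs (Rx (s^2) s (s^2 * w)) X Y a a2 i j g g2 = YB_rhs (Rx (s^2) s (s^2 * w)) X Y a a2 i j g g2"
proof (cases "a + a2 + i = g + g2 + j")
  case False
  then show ?thesis by (simp add: YB_sides_vanish)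
next
  case True
  define YB where "YB w \<longleftrightarrow>
    (\<forall>a\<in>{1,2,3}. \<forall>a2\<in>{1,2,3}. \<forall>i\<in>{1,2,3}. \<forall>j\<in>{1,2,3}. \<forall>g\<in>{1,2,3}. \<forall>g2\<in>{1,2,3}.
      if a + a2 + i = g + g2 + j
      then YB_lhs (Rx (s^2) s (s^2 * w)) X Y a a2 i j g g2 = YB_rhs (Rx (s^2) s (s^2 * w)) X Y a a2 i j g g2
      else True)" for w
  \<comment> \<open>The guard keeps the expansion to the charge-conserving components; \<open>if_weak_cong\<close> stops the
    simplifier from expanding the others.\<close>
  have "YB 1"
    unfolding YB_def YB_lhs_def YB_rhs_def ball_simps(7) ball_empty simp_thms
    by (intro conjI; simp only: if_P if_not_P sum_insert_123 Rx_entries[OF assms(1)] Rx_charge_conservation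
        mult_zero_left mult_zero_right add_0_left add_0_right cong: if_weak_cong; algebra)
  moreover have "YB (- (s^4))"
    unfolding YB_def YB_lhs_def YB_rhs_def ball_simps(7) ball_empty simp_thms
    by (intro conjI; simp only: if_P if_not_P sum_insert_123 Rx_entries[OF assms(1)] Rx_charge_conservation
        mult_zero_left mult_zero_right add_0_left add_0_right cong: if_weak_cong; algebra)
  ultimately have "YB w" using assms(2) by blast
  then have "if a + a2 + i = g + g2 + j
      then YB_lhs (Rx (s^2) s (s^2 * w)) X Y a a2 i j g g2 = YB_rhs (Rx (s^2) s (s^2 * w)) X Y a a2 i j g g2
      else True"
    using assms(3-8) unfolding YB_def by blast
  with True show ?thesis by simp
qed

text \<open>The product \<open>R\<^sub>a\<^sub>n(\<lambda> - \<nu>) R\<^sub>b\<^sub>n(\<mu> - \<nu>)\<close> of two auxiliary spaces a, b on one quantum site n.\<close>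

definition Rent2 :: "complex \<Rightarrow> complex \<Rightarrow> complex \<Rightarrow> complex \<Rightarrow> complex \<Rightarrow> complex
    \<Rightarrow> nat \<Rightarrow> nat \<Rightarrow> nat \<Rightarrow> nat \<Rightarrow> nat \<Rightarrow> nat \<Rightarrow> complex" where
  "Rent2 q s z lam mu nu a a2 i j g g2 =
     (\<Sum>k\<in>{1,2,3}. Rent q s z (lam - nu) a i g k * Rent q s z (mu - nu) a2 k g2 j)"

lemma Rent_Yang_Baxter:
  assumes "s \<noteq> 0" "q = s^2" "z = q \<or> z = - (q^3)"
    and "a \<in> {1,2,3}" "a2 \<in> {1,2,3}" "i \<in> {1,2,3}" "j \<in> {1,2,3}" "g \<in> {1,2,3}" "g2 \<in> {1,2,3}"
  shows "(\<Sum>c\<in>{1,2,3}. \<Sum>c2\<in>{1,2,3}. Rent q s z (lam - mu) a a2 c c2 * Rent2 q s z lam mu nu c c2 i j g g2) =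
         (\<Sum>c\<in>{1,2,3}. \<Sum>c2\<in>{1,2,3}. Rent2 q s z mu lam nu a2 a i j c2 c * Rent q s z (lam - mu) c c2 g g2)"
proof -
  have "z = s^2 * 1 \<or> z = s^2 * (- (s^4))"
    using assms(2,3) by (auto simp: power_mult[symmetric] power_add[symmetric])
  then obtain w where w: "z = s^2 * w" "w = 1 \<or> w = - (s^4)"
    by blast
  have "exp (2 * (lam - nu)) = exp (2 * (lam - mu)) * exp (2 * (mu - nu))"
    unfolding mult_exp_exp by (simp add: algebra_simps)
  then show ?thesis
    using Rx_Yang_Baxter[OF assms(1) w(2) assms(4-9), of "exp (2 * (lam - mu))" "exp (2 * (mu - nu))"]
    using assms(4-9) unfolding YB_lhs_def YB_rhs_def
    by (simp add: Rent2_def Rent_eq_Rx assms(2) w(1) cong: sum.cong)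
qed

definition Tmono2 :: "complex \<Rightarrow> complex \<Rightarrow> complex \<Rightarrow> complex list \<Rightarrow> complex \<Rightarrow> complex
    \<Rightarrow> nat \<Rightarrow> nat \<Rightarrow> nat \<Rightarrow> nat \<Rightarrow> nat list \<Rightarrow> nat list \<Rightarrow> complex" where
  "Tmono2 q s z mus lam mu a a2 b b2 xs ys =
     (\<Sum>ks\<in>states (length mus). Tmono q s z lam mus a b xs ks * Tmono q s z mu mus a2 b2 ks ys)"

lemma Tmono2_Cons:
  "Tmono2 q s z (nu # ms) lam mu a a2 b b2 (i # xs) (j # ys) =
   (\<Sum>g\<in>{1,2,3}. \<Sum>g2\<in>{1,2,3}. Rent2 q s z lam mu nu a a2 i j g g2 * Tmono2 q s z ms lam mu g g2 b b2 xs ys)"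
  unfolding Tmono2_def Rent2_def length_Cons sum_states_Suc Tmono.simps
  by (rule sum_product_pairs)

lemma Tmono2_Nil: "Tmono2 q s z [] lam mu a a2 b b2 [] [] = (if a = b \<and> a2 = b2 then 1 else 0)"
proof -
  have "states 0 = {[]}" by (auto simp: states_def)
  then show ?thesis by (simp add: Tmono2_def)
qed

lemma RTT_relation_Nil:
  assumes "a \<in> {1,2,3}" "a2 \<in> {1,2,3}" "b \<in> {1,2,3}" "b2 \<in> {1,2,3}"
  shows "(\<Sum>c\<in>{1,2,3}. \<Sum>c2\<in>{1,2,3}. Rent q s z lam a a2 c c2 * Tmono2 q s z [] lam' mu c c2 b b2 [] []) =
         (\<Sum>c\<in>{1,2,3}. \<Sum>c2\<in>{1,2,3}. Tmono2 q s z [] mu lam' a2 a c2 c [] [] * Rent q s z lam c c2 b b2)"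
proof -
  have "Tmono2 q s z [] mu lam' a2 a c2 c [] [] * Rent q s z lam c c2 b b2 =
      Rent q s z lam c c2 b b2 * (if c = a \<and> c2 = a2 then 1 else 0)" for c c2
    by (auto simp: Tmono2_Nil)
  then have "(\<Sum>c\<in>{1,2,3}. \<Sum>c2\<in>{1,2,3}. Tmono2 q s z [] mu lam' a2 a c2 c [] [] * Rent q s z lam c c2 b b2) =
      Rent q s z lam a a2 b b2"
    using assms(1,2) by (simp only:) (intro sum_pairs_delta; auto)
  moreover have "(\<Sum>c\<in>{1,2,3}. \<Sum>c2\<in>{1,2,3}. Rent q s z lam a a2 c c2 * Tmono2 q s z [] lam' mu c c2 b b2 [] []) =
      Rent q s z lam a a2 b b2"
    unfolding Tmono2_Nil using assms(3,4) by (intro sum_pairs_delta) auto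
  ultimately show ?thesis by (simp only:)
qed

lemma RTT_relation:
  assumes "s \<noteq> 0" "q = s^2" "z = q \<or> z = - (q^3)"
  shows "a \<in> {1,2,3} \<Longrightarrow> a2 \<in> {1,2,3} \<Longrightarrow> b \<in> {1,2,3} \<Longrightarrow> b2 \<in> {1,2,3} \<Longrightarrow>
    xs \<in> states (length mus) \<Longrightarrow> ys \<in> states (length mus) \<Longrightarrow>
    (\<Sum>c\<in>{1,2,3}. \<Sum>c2\<in>{1,2,3}. Rent q s z (lam - mu) a a2 c c2 * Tmono2 q s z mus lam mu c c2 b b2 xs ys) =
    (\<Sum>c\<in>{1,2,3}. \<Sum>c2\<in>{1,2,3}. Tmono2 q s z mus mu lam a2 a c2 c xs ys * Rent q s z (lam - mu) c c2 b b2)"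
proof (induction mus arbitrary: a a2 b b2 xs ys)
  case Nil
  then have "xs = []" "ys = []" by (auto simp: states_def)
  then show ?case using RTT_relation_Nil[OF Nil.prems(1-4)] by (simp only:)
next
  case (Cons nu ms)
  let ?I = "{1::nat,2,3}"
  let ?R = "Rent q s z (lam - mu)"
  obtain i xs' where xs: "xs = i # xs'" "i \<in> ?I" "xs' \<in> states (length ms)"
    using Cons.prems(5) by (cases xs) (auto simp: states_def)
  obtain j ys' where ys: "ys = j # ys'" "j \<in> ?I" "ys' \<in> states (length ms)"
    using Cons.prems(6) by (cases ys) (auto simp: states_def)
  have "(\<Sum>c\<in>?I. \<Sum>c2\<in>?I. ?R a a2 c c2 * Tmono2 q s z (nu # ms) lam mu c c2 b b2 xs ys) =
      (\<Sum>g\<in>?I. \<Sum>g2\<in>?I. (\<Sum>c\<in>?I. \<Sum>c2\<in>?I. ?R a a2 c c2 * Rent2 q s z lam mu nu c c2 i j g g2) *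
         Tmono2 q s z ms lam mu g g2 b b2 xs' ys')"
    unfolding xs ys Tmono2_Cons by (rule sum_pairs_assoc)
  also have "\<dots> = (\<Sum>g\<in>?I. \<Sum>g2\<in>?I. (\<Sum>c\<in>?I. \<Sum>c2\<in>?I. Rent2 q s z mu lam nu a2 a i j c2 c * ?R c c2 g g2) *
         Tmono2 q s z ms lam mu g g2 b b2 xs' ys')"
    using Rent_Yang_Baxter[OF assms] Cons.prems(1,2) xs(2) ys(2) by (intro sum.cong refl) simp
  also have "\<dots> = (\<Sum>c\<in>?I. \<Sum>c2\<in>?I. Rent2 q s z mu lam nu a2 a i j c2 c *
         (\<Sum>g\<in>?I. \<Sum>g2\<in>?I. ?R c c2 g g2 * Tmono2 q s z ms lam mu g g2 b b2 xs' ys'))"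
    by (rule sum_pairs_assoc[symmetric])
  also have "\<dots> = (\<Sum>c\<in>?I. \<Sum>c2\<in>?I. Rent2 q s z mu lam nu a2 a i j c2 c *
         (\<Sum>h\<in>?I. \<Sum>h2\<in>?I. Tmono2 q s z ms mu lam c2 c h2 h xs' ys' * ?R h h2 b b2))"
    using Cons.IH Cons.prems(3,4) xs(3) ys(3) by (intro sum.cong refl) simp
  also have "\<dots> = (\<Sum>h\<in>?I. \<Sum>h2\<in>?I. (\<Sum>c\<in>?I. \<Sum>c2\<in>?I. Rent2 q s z mu lam nu a2 a i j c2 c *
         Tmono2 q s z ms mu lam c2 c h2 h xs' ys') * ?R h h2 b b2)"
    by (rule sum_pairs_assoc)
  also have "\<dots> = (\<Sum>h\<in>?I. \<Sum>h2\<in>?I. Tmono2 q s z (nu # ms) mu lam a2 a h2 h xs ys * ?R h h2 b b2)"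
    unfolding xs ys Tmono2_Cons by (subst sum.swap[of _ ?I ?I]) (rule refl)
  finally show ?case .
qed

section \<open>Commutation of the operators E\<close>

lemma E_commute_up_to_factor:
  fixes lam mu :: complex
  assumes "s \<noteq> 0" "q = s^2" "z = q \<or> z = - (q^3)"
    and "xs \<in> states (length mus)" "ys \<in> states (length mus)"
  defines "x \<equiv> exp (2 * (lam - mu))"
  shows "(x - z) * (x - q^2) * Tmono2 q s z mus lam mu 1 1 3 3 xs ys =
         (x - z) * (x - q^2) * Tmono2 q s z mus mu lam 1 1 3 3 xs ys"
proof -
  let ?I = "{1::nat,2,3}"
  have "(x - z) * (x - q^2) * Tmono2 q s z mus lam mu 1 1 3 3 xs ys =
      (\<Sum>c\<in>?I. \<Sum>c2\<in>?I. ((x - z) * (x - q^2) * Tmono2 q s z mus lam mu c c2 3 3 xs ys) *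
         (if c = 1 \<and> c2 = 1 then 1 else 0))"
    by (rule sum_pairs_delta[symmetric]) auto
  also have "\<dots> = (\<Sum>c\<in>?I. \<Sum>c2\<in>?I. Rent q s z (lam - mu) 1 1 c c2 * Tmono2 q s z mus lam mu c c2 3 3 xs ys)"
    by (intro sum.cong refl) (subst Rent_first_row_last_column(1); auto simp: x_def)
  also have "\<dots> = (\<Sum>c\<in>?I. \<Sum>c2\<in>?I. Tmono2 q s z mus mu lam 1 1 c2 c xs ys * Rent q s z (lam - mu) c c2 3 3)"
    using assms(4,5) by (intro RTT_relation[OF assms(1-3)]) auto
  also have "\<dots> = (\<Sum>c\<in>?I. \<Sum>c2\<in>?I. ((x - z) * (x - q^2) * Tmono2 q s z mus mu lam 1 1 c2 c xs ys) *
         (if c = 3 \<and> c2 = 3 then 1 else 0))"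
    by (intro sum.cong refl) (subst Rent_first_row_last_column(2); auto simp: x_def)
  also have "\<dots> = (x - z) * (x - q^2) * Tmono2 q s z mus mu lam 1 1 3 3 xs ys"
    by (rule sum_pairs_delta) auto
  finally show ?thesis .
qed

lemma E_commute:
  assumes "s \<noteq> 0" "q = s^2" "z = q \<or> z = - (q^3)"
    and "xs \<in> states (length mus)" "ys \<in> states (length mus)"
  shows "Tmono2 q s z mus lam mu 1 1 3 3 xs ys = Tmono2 q s z mus mu lam 1 1 3 3 xs ys"
proof -
  let ?S = "states (length mus)"
  define w where "w = exp (-2 * mu)"
  define P1 where "P1 = (\<Sum>ks\<in>?S. smult (Tmono q s z mu mus 1 3 ks ys) (Tpoly q s z mus 1 3 xs ks))"
  define P2 where "P2 = (\<Sum>ks\<in>?S. smult (Tmono q s z mu mus 1 3 xs ks) (Tpoly q s z mus 1 3 ks ys))"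
  have P1: "Tmono2 q s z mus l mu 1 1 3 3 xs ys = poly P1 (exp (2 * l))" for l
    using assms(4,5) unfolding Tmono2_def P1_def poly_sum poly_smult
    by (intro sum.cong refl) (simp add: Tmono_eq_poly_Tpoly states_def)
  have P2: "Tmono2 q s z mus mu l 1 1 3 3 xs ys = poly P2 (exp (2 * l))" for l
    using assms(4,5) unfolding Tmono2_def P2_def poly_sum poly_smult
    by (intro sum.cong refl) (simp add: Tmono_eq_poly_Tpoly states_def)
  define A where "A = [:-z, w:] * [:-(q^2), w:]"
  have A: "poly A (exp (2 * l)) = (exp (2 * (l - mu)) - z) * (exp (2 * (l - mu)) - q^2)" for l
  proof -
    have "exp (2 * (l - mu)) = w * exp (2 * l)"
      unfolding w_def mult_exp_exp by (simp add: algebra_simps)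
    then show ?thesis by (simp add: A_def algebra_simps)
  qed
  have "P1 = P2"
  proof (rule poly_cancel_nonzero_factor)
    show "A \<noteq> 0" by (simp add: A_def w_def)
    fix X :: complex assume "X \<noteq> 0"
    then obtain u where "exp u = X"
      using exp_surjective_nonzero by blast
    then have X: "exp (2 * (u / 2)) = X" by simp
    show "poly A X * poly P1 X = poly A X * poly P2 X"
      using E_commute_up_to_factor[OF assms, of "u / 2" mu] by (simp only: P1 P2 A[symmetric] X)
  qed
  then show ?thesis using P1 P2 by simp
qed

lemma applyE_applyE:
  "applyE q s z mus mu (applyE q s z mus lam v) xs =
     (\<Sum>ks\<in>states (length mus). Tmono2 q s z mus mu lam 1 1 3 3 xs ks * v ks)"
proof -
  let ?S = "states (length mus)"
  let ?T = "\<lambda>l a b. Tmono q s z l mus 1 3 a b"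
  have "applyE q s z mus mu (applyE q s z mus lam v) xs = (\<Sum>ys\<in>?S. ?T mu xs ys * (\<Sum>ks\<in>?S. ?T lam ys ks * v ks))"
    unfolding applyE_def ..
  also have "\<dots> = (\<Sum>ys\<in>?S. \<Sum>ks\<in>?S. ?T mu xs ys * ?T lam ys ks * v ks)"
    by (simp add: sum_distrib_left mult.assoc)
  also have "\<dots> = (\<Sum>ks\<in>?S. \<Sum>ys\<in>?S. ?T mu xs ys * ?T lam ys ks * v ks)"
    by (rule sum.swap)
  also have "\<dots> = (\<Sum>ks\<in>?S. Tmono2 q s z mus mu lam 1 1 3 3 xs ks * v ks)"
    unfolding Tmono2_def by (simp add: sum_distrib_right)
  finally show ?thesis .
qed

lemma applyE_commute:
  assumes "s \<noteq> 0" "q = s^2" "z = q \<or> z = - (q^3)" "xs \<in> states (length mus)"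
  shows "applyE q s z mus mu (applyE q s z mus lam v) xs = applyE q s z mus lam (applyE q s z mus mu v) xs"
  unfolding applyE_applyE using E_commute[OF assms] by (intro sum.cong) auto

lemma applyE_restrict: "applyE q s z mus lam (restrict v (states (length mus))) = applyE q s z mus lam v"
  unfolding applyE_def by (intro ext sum.cong) auto

text \<open>Outside the basis states the vectors carry junk values on which the operators E need not
  commute, so they are restricted to the basis states before \<open>fold_multiset_equiv\<close> is applied.\<close>

lemma Zpart_permute:
  assumes "s \<noteq> 0" "q = s^2" "z = q \<or> z = - (q^3)" "mset lams' = mset lams"
  shows "Zpart q s z mus lams' = Zpart q s z mus lams"
proof -
  let ?S = "states (length mus)"
  define v0 where "v0 = (\<lambda>js. if js = replicate (length mus) (1::nat) then 1 else (0::complex))"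
  define F where "F lam v = restrict (applyE q s z mus lam v) ?S" for lam v
  have restrict_foldl: "restrict (foldl (\<lambda>v lam. applyE q s z mus lam v) v ls) ?S =
      fold F ls (restrict v ?S)" for v ls
  proof (induction ls arbitrary: v)
    case (Cons l ls)
    have "F l (restrict v ?S) = restrict (applyE q s z mus l v) ?S"
      by (simp only: F_def applyE_restrict)
    then show ?case by (simp only: foldl_Cons fold_Cons comp_apply Cons.IH)
  qed simp
  have "F x (F y v) = F y (F x v)" for x y v
  proof -
    have "F x (F y v) = restrict (applyE q s z mus x (applyE q s z mus y v)) ?S"
      by (simp only: F_def applyE_restrict)
    also have "\<dots> = restrict (applyE q s z mus y (applyE q s z mus x v)) ?S"
      using applyE_commute[OF assms(1-3)] by (intro restrict_ext)
    also have "\<dots> = F y (F x v)"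
      by (simp only: F_def applyE_restrict)
    finally show ?thesis .
  qed
  then have "F x \<circ> F y = F y \<circ> F x" for x y
    by (simp add: fun_eq_iff)
  then have fold_eq: "fold F lams' = fold F lams"
    using assms(4) by (intro fold_multiset_equiv) auto
  have "replicate (length mus) 3 \<in> ?S" by (auto simp: states_def)
  then have "Zpart q s z mus ls = fold F ls (restrict v0 ?S) (replicate (length mus) 3)" for ls
    unfolding Zpart_def v0_def restrict_foldl[symmetric] by simp
  then show ?thesis using fold_eq by simp
qed

theorem lemma2p1:
  fixes q s z :: complex and L :: nat and mus :: "complex list"
  assumes "q \<noteq> 0" and "s\<^sup>2 = q" and "z = q \<or> z = - (q^3)"
    and "L \<ge> 1" and "length mus = L"
  shows "(\<exists>c :: (nat \<Rightarrow> nat) \<Rightarrow> complex.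
            \<forall>lams. length lams = L \<longrightarrow>
              Zpart q s z mus lams =
                (\<Sum>e\<in>PiE {..<L} (\<lambda>_. {..2 * L - 1}).
                    c e * (\<Prod>i<L. exp (2 * lams ! i) ^ e i)))
       \<and> (\<forall>lams lams'. length lams = L \<longrightarrow> mset lams' = mset lams \<longrightarrow>
              Zpart q s z mus lams' = Zpart q s z mus lams)"
proof
  have "replicate L 3 \<in> states (length mus)"
    using assms(5) by (auto simp: states_def)
  then have "poly_in_vars (\<lambda>lam. exp (2 * lam)) L (2 * L - 1) (Zpart q s z mus)"
    using poly_in_vars_applyE_iterate assms(5) unfolding Zpart_def by metis
  then show "\<exists>c :: (nat \<Rightarrow> nat) \<Rightarrow> complex. \<forall>lams. length lams = L \<longrightarrow>
      Zpart q s z mus lams = (\<Sum>e\<in>PiE {..<L} (\<lambda>_. {..2 * L - 1}). c e * (\<Prod>i<L. exp (2 * lams ! i) ^ e i))"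
    unfolding poly_in_vars_def .
  have "s \<noteq> 0" "q = s^2" using assms(1,2) by auto
  then show "\<forall>lams lams'. length lams = L \<longrightarrow> mset lams' = mset lams \<longrightarrow>
      Zpart q s z mus lams' = Zpart q s z mus lams"
    using Zpart_permute assms(3) by blast
qed

end
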